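(* Assume (A1), (A2), (A3), (A5). There exist nice constants $\kappa_1,\kappa_2$ such that, for every large enough constant $\alpha$, $$\mathbb P\big(\|\mathcal W_N\mathcal W_N^H-\widetilde{\mathcal W}_N\widetilde{\mathcal W}_N^H\|>\alpha\big)\le\kappa_1L\exp(-\kappa_2M\alpha).$$
   Context: (A1): $(y_{m,n})_{n\in\mathbb Z}$, $m\ge1$, are mutually independent stationary zero-mean jointly circularly symmetric complex Gaussian scalar time series with autocovariances $r_m(k)=\mathbb E[y_{m,n+k}y_{m,n}^*]$ and spectral densities $\mathcal S_m$. (A2): $M=M(N)$, $L=L(N)$, $M,N\to\infty$, $ML/N\to c_\star\in(0,\infty)$, $L=O(N^\beta)$, $\beta\in(0,1)$. (A3): $\sup_m\max_\nu\mathcal S_m<\infty$, $\inf_m\min_\nu\mathcal S_m>0$. (A5): for some $\gamma_0>0$, $\sup_m\sum_n(1+|n|)^{\gamma_0}|r_m(n)|<\infty$. Let $\mathbf y_n=(y_{1,n},\dots,y_{M,n})^T$. $\mathcal W_N$ is the $ML\times N$ block matrix whose $(l,n)$ block ($l=1,\dots,L$, $n=1,\dots,N$, blocks of size $M\times1$) is $N^{-1/2}\mathbf y_{n+l-1}$. $\widetilde{\mathcal W}_N$ is the $ML\times(N+L-1)$ block matrix whose $(l,j)$ block ($l=1,\dots,L$, $j=1,\dots,N+L-1$) is $N^{-1/2}\mathbf y_{j+l-L}$ if $1\le j+l-L\le N$ and $0$ otherwise. A nice constant is a positive constant independent of $L,M,N$. *)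

theory Defs
  imports "HOL-Probability.Probability"
begin

definition real_gaussian :: "'a measure \<Rightarrow> ('a \<Rightarrow> real) \<Rightarrow> bool" where
  "real_gaussian M X \<longleftrightarrow> X \<in> borel_measurable M \<and>
     (\<exists>\<mu> \<sigma>. (\<sigma> = 0 \<and> (AE \<omega> in M. X \<omega> = \<mu>)) \<or>
            (\<sigma> > 0 \<and> distributed M lborel X (normal_density \<mu> \<sigma>)))"

text \<open>A zero-mean jointly circularly symmetric complex Gaussian scalar time series
  indexed by the integers: all finite linear combinations are jointly (real) Gaussian,
  the mean is zero and the pseudo-covariance vanishes.\<close>
definition zm_ccs_gaussian_series :: "'a measure \<Rightarrow> (int \<Rightarrow> 'a \<Rightarrow> complex) \<Rightarrow> bool" where
  "zm_ccs_gaussian_series M x \<longleftrightarrow>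
     (\<forall>n. x n \<in> borel_measurable M) \<and>
     (\<forall>F c. finite F \<longrightarrow> real_gaussian M (\<lambda>\<omega>. Re (\<Sum>n\<in>F. c n * x n \<omega>))) \<and>
     (\<forall>n. integral\<^sup>L M (x n) = 0) \<and>
     (\<forall>n n'. integral\<^sup>L M (\<lambda>\<omega>. x n \<omega> * x n' \<omega>) = 0)"

definition spectral_density :: "(int \<Rightarrow> complex) \<Rightarrow> real \<Rightarrow> complex" where
  "spectral_density r \<nu> = (\<Sum>\<^sub>\<infinity>k\<in>(UNIV::int set). r k * cis (- 2 * pi * real_of_int k * \<nu>))"

definition opnorm :: "'i set \<Rightarrow> 'j set \<Rightarrow> ('i \<Rightarrow> 'j \<Rightarrow> complex) \<Rightarrow> real" where
  "opnorm I J A = Sup {sqrt (\<Sum>i\<in>I. (cmod (\<Sum>j\<in>J. A i j * x j))\<^sup>2) | x.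
                        (\<Sum>j\<in>J. (cmod (x j))\<^sup>2) \<le> 1}"

definition gram :: "'j set \<Rightarrow> ('i \<Rightarrow> 'j \<Rightarrow> complex) \<Rightarrow> 'i \<Rightarrow> 'i \<Rightarrow> complex" where
  "gram J A i i' = (\<Sum>j\<in>J. A i j * cnj (A i' j))"

text \<open>The matrix W_N: row index (l,m) with l in {1..L}, m in {1..M} (entry m of block l),
  column index n in {1..N}; entry N^(-1/2) y_{m,n+l-1}.\<close>
definition W_mat :: "(nat \<Rightarrow> int \<Rightarrow> 'a \<Rightarrow> complex) \<Rightarrow> nat \<Rightarrow> 'a \<Rightarrow> nat \<times> nat \<Rightarrow> nat \<Rightarrow> complex" where
  "W_mat y N \<omega> lm n = y (snd lm) (int n + int (fst lm) - 1) \<omega> / complex_of_real (sqrt (real N))"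

text \<open>The matrix W~_N: column index j in {1..N+L-1}; entry N^(-1/2) y_{m,j+l-L} if
  1 <= j+l-L <= N and 0 otherwise.\<close>
definition Wt_mat :: "(nat \<Rightarrow> int \<Rightarrow> 'a \<Rightarrow> complex) \<Rightarrow> nat \<Rightarrow> nat \<Rightarrow> 'a \<Rightarrow> nat \<times> nat \<Rightarrow> nat \<Rightarrow> complex" where
  "Wt_mat y N L \<omega> lm j =
     (let t = int j + int (fst lm) - int L in
      if 1 \<le> t \<and> t \<le> int N then y (snd lm) t \<omega> / complex_of_real (sqrt (real N)) else 0)"

end

theory Submission
  imports Defs
begin

(*
  W_N and W~_N share all columns except the last L - 1 of each and the first L - 1 of W~_N,
  so W W^H - W~ W~^H is a combination of three Gram matrices of narrow edge blocks, each
  filled from a window of fewer than 2L consecutive samples of every series. These blocks are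
  block-Hankel; embedding them into a DFT of length 3L bounds the operator norm of each Gram
  matrix by 1/N times the largest, over the 3L Fourier frequencies, of the windowed
  periodogram summed over the M series. At a fixed frequency this is a sum of M independent
  variables |Z_m|^2, where Z_m is circular Gaussian with variance at most v = 2 L R, R being
  a bound for sum_k |r_m(k)| given by (A5). Hence E exp(|Z_m|^2 / (8 v)) <= sqrt 2, and the
  Chernoff bound gives exp(-N alpha / (48 L R)) 2^(M/2). A union bound over the 9L (window,
  frequency) pairs and ML/N -> c_star yield kappa_1 L exp(-kappa_2 M alpha) for large alpha.
*)

section \<open>Exponential moments of Gaussian variables\<close>

lemma real_gaussian_measurable: "real_gaussian M X \<Longrightarrow> X \<in> borel_measurable M"
  by (simp add: real_gaussian_def)

lemma real_gaussian_cases: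
  assumes "real_gaussian M X"
  obtains (degenerate) \<mu> where "AE \<omega> in M. X \<omega> = \<mu>"
    | (normal) \<mu> \<sigma> where "0 < \<sigma>" "distributed M lborel X (normal_density \<mu> \<sigma>)"
  using assms unfolding real_gaussian_def by blast

lemma real_gaussian_integrable:
  assumes "prob_space P" and "real_gaussian P X"
  shows "integrable P X" and "integrable P (\<lambda>\<omega>. (X \<omega>)\<^sup>2)"
proof -
  interpret prob_space P by fact
  have [measurable]: "X \<in> borel_measurable P"
    using assms(2) by (rule real_gaussian_measurable)
  from assms(2) have "integrable P X \<and> integrable P (\<lambda>\<omega>. (X \<omega>)\<^sup>2)"
  proof (cases rule: real_gaussian_cases)
    case (degenerate \<mu>)
    then show ?thesis
      by (auto intro: integrable_cong_AE_imp[where g="\<lambda>_. \<mu>"] integrable_cong_AE_imp[where g="\<lambda>_. \<mu>\<^sup>2"])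
  next
    case (normal \<mu> \<sigma>)
    let ?f = "normal_density \<mu> \<sigma>"
    have m: "integrable lborel (\<lambda>x. ?f x * (x - \<mu>) ^ k)" for k
      by (rule integrable_normal_moment[OF normal(1)])
    have "(\<lambda>x. ?f x * x\<^sup>2) =
        (\<lambda>x. ?f x * (x - \<mu>) ^ 2 + 2 * \<mu> * (?f x * (x - \<mu>) ^ 1) + \<mu>\<^sup>2 * (?f x * (x - \<mu>) ^ 0))"
      by (simp add: power2_eq_square algebra_simps)
    then have "integrable lborel (\<lambda>x. ?f x * x\<^sup>2)"
      using m[of 0] m[of 1] m[of 2] by simp
    then show ?thesis
      using integrable_normal_moment_nz_1[OF normal(1)] distributed_integrable[OF normal(2), of "\<lambda>x. x"]
        distributed_integrable[OF normal(2), of "\<lambda>x. x\<^sup>2"]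
      by simp
  qed
  then show "integrable P X" and "integrable P (\<lambda>\<omega>. (X \<omega>)\<^sup>2)" by auto
qed

lemma normal_density_mult_exp_square:
  fixes \<sigma> v :: real
  assumes \<sigma>: "0 < \<sigma>" and \<sigma>v: "\<sigma>\<^sup>2 \<le> v"
  obtains \<tau> where "0 < \<tau>" "\<tau> / \<sigma> \<le> sqrt 2"
    "\<And>x. normal_density 0 \<sigma> x * exp (x\<^sup>2 / (4 * v)) = \<tau> / \<sigma> * normal_density 0 \<tau> x"
proof
  define a where "a = 1 / (2 * \<sigma>\<^sup>2) - 1 / (4 * v)"
  define \<tau> where "\<tau> = sqrt (1 / (2 * a))"
  have s2: "0 < \<sigma>\<^sup>2" using \<sigma> by simp
  have v: "0 < v" using s2 \<sigma>v by linarith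
  have a_ge: "1 / (4 * \<sigma>\<^sup>2) \<le> a"
    unfolding a_def using s2 \<sigma>v v by (simp add: field_simps)
  have a: "0 < a" using a_ge s2 by (meson divide_pos_pos order_less_le_trans zero_less_numeral zero_less_one mult_pos_pos)
  then show \<tau>: "0 < \<tau>" unfolding \<tau>_def by simp
  have \<tau>2: "\<tau>\<^sup>2 = 1 / (2 * a)" unfolding \<tau>_def using a by simp
  have "1 / (2 * a) \<le> 2 * \<sigma>\<^sup>2"
  proof -
    have "1 \<le> a * (4 * \<sigma>\<^sup>2)" using a_ge s2 by (simp add: field_simps)
    then show ?thesis using a s2 by (simp add: field_simps)
  qed
  then have "\<tau>\<^sup>2 \<le> (sqrt 2 * \<sigma>)\<^sup>2" using \<tau>2 by (simp add: power_mult_distrib)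
  then have "\<tau> \<le> sqrt 2 * \<sigma>"
    using \<tau> \<sigma> by (meson power2_le_imp_le less_imp_le mult_nonneg_nonneg real_sqrt_ge_zero zero_le_numeral)
  then show "\<tau> / \<sigma> \<le> sqrt 2" using \<sigma> by (simp add: field_simps)
  fix x :: real
  have "- x\<^sup>2 / (2 * \<sigma>\<^sup>2) + x\<^sup>2 / (4 * v) = - x\<^sup>2 / (2 * \<tau>\<^sup>2)"
    unfolding \<tau>2 a_def using s2 v a by (simp add: field_simps)
  then have "exp (- x\<^sup>2 / (2 * \<sigma>\<^sup>2)) * exp (x\<^sup>2 / (4 * v)) = exp (- x\<^sup>2 / (2 * \<tau>\<^sup>2))"
    by (simp add: exp_add[symmetric])
  moreover have "sqrt (2 * pi * \<sigma>\<^sup>2) = sqrt (2 * pi) * \<sigma>" "sqrt (2 * pi * \<tau>\<^sup>2) = sqrt (2 * pi) * \<tau>"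
    using \<sigma> \<tau> by (simp_all add: real_sqrt_mult)
  ultimately show "normal_density 0 \<sigma> x * exp (x\<^sup>2 / (4 * v)) = \<tau> / \<sigma> * normal_density 0 \<tau> x"
    unfolding normal_density_def using \<sigma> \<tau> by simp
qed

lemma real_gaussian_exp_square_le:
  assumes "prob_space P" and "real_gaussian P X"
    and "integral\<^sup>L P X = 0" and "integral\<^sup>L P (\<lambda>\<omega>. (X \<omega>)\<^sup>2) \<le> v" and "0 < v"
  shows "(\<integral>\<^sup>+\<omega>. ennreal (exp ((X \<omega>)\<^sup>2 / (4 * v))) \<partial>P) \<le> ennreal (sqrt 2)"
proof -
  interpret prob_space P by fact
  have [measurable]: "X \<in> borel_measurable P"
    using assms(2) by (rule real_gaussian_measurable)
  from assms(2) show ?thesis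
  proof (cases rule: real_gaussian_cases)
    case (degenerate \<mu>)
    have "integral\<^sup>L P X = \<mu>"
      using integral_cong_AE[of X P "\<lambda>_. \<mu>"] degenerate by (simp add: prob_space)
    then have "AE \<omega> in P. X \<omega> = 0" using degenerate assms(3) by simp
    then have "(\<integral>\<^sup>+\<omega>. ennreal (exp ((X \<omega>)\<^sup>2 / (4 * v))) \<partial>P) = (\<integral>\<^sup>+\<omega>. 1 \<partial>P)"
      by (intro nn_integral_cong_AE) auto
    then show ?thesis by (simp add: emeasure_space_1)
  next
    case (normal \<mu> \<sigma>)
    have "\<mu> = 0"
      using normal_distributed_expectation[OF normal] assms(3) by simp
    have "\<sigma>\<^sup>2 \<le> v"
      using normal_distributed_variance[OF normal] assms(3,4) by simp
    then obtain \<tau> where \<tau>: "0 < \<tau>" "\<tau> / \<sigma> \<le> sqrt 2"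
      and tilt: "\<And>x. normal_density 0 \<sigma> x * exp (x\<^sup>2 / (4 * v)) = \<tau> / \<sigma> * normal_density 0 \<tau> x"
      using normal_density_mult_exp_square[OF normal(1)] by blast
    have "(\<integral>\<^sup>+\<omega>. ennreal (exp ((X \<omega>)\<^sup>2 / (4 * v))) \<partial>P)
        = (\<integral>\<^sup>+x. ennreal (normal_density \<mu> \<sigma> x) * ennreal (exp (x\<^sup>2 / (4 * v))) \<partial>lborel)"
      by (rule distributed_nn_integral[OF normal(2), symmetric]) simp
    also have "\<dots> = (\<integral>\<^sup>+x. ennreal (\<tau> / \<sigma>) * ennreal (normal_density 0 \<tau> x) \<partial>lborel)"
      using normal(1) \<tau> by (intro nn_integral_cong) (simp add: \<open>\<mu> = 0\<close> ennreal_mult'[symmetric] tilt)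
    also have "\<dots> = ennreal (\<tau> / \<sigma>)"
      using \<tau>(1) by (simp add: nn_integral_cmult nn_integral_eq_integral)
    finally show ?thesis using \<tau>(2) by (simp add: ennreal_leI)
  qed
qed

lemma exp_add_le_mean_exp_double:
  fixes a b :: real
  shows "exp (a + b) \<le> (exp (2 * a) + exp (2 * b)) / 2"
proof -
  have "2 * (exp a * exp b) \<le> (exp a)\<^sup>2 + (exp b)\<^sup>2"
    using sum_squares_bound[of "exp a" "exp b"] by (simp add: power2_eq_square)
  moreover have "(exp a)\<^sup>2 = exp (2 * a)" "(exp b)\<^sup>2 = exp (2 * b)"
    by (simp_all add: power2_eq_square exp_add[symmetric])
  ultimately show ?thesis by (simp add: exp_add)
qed

lemma complex_gaussian_exp_square_le:
  fixes Z :: "'a \<Rightarrow> complex"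
  assumes P: "prob_space P"
    and Re: "real_gaussian P (\<lambda>\<omega>. Re (Z \<omega>))" "integral\<^sup>L P (\<lambda>\<omega>. Re (Z \<omega>)) = 0"
    and Im: "real_gaussian P (\<lambda>\<omega>. Im (Z \<omega>))" "integral\<^sup>L P (\<lambda>\<omega>. Im (Z \<omega>)) = 0"
    and var: "integral\<^sup>L P (\<lambda>\<omega>. (cmod (Z \<omega>))\<^sup>2) \<le> v" and v: "0 < v"
  shows "(\<integral>\<^sup>+\<omega>. ennreal (exp ((cmod (Z \<omega>))\<^sup>2 / (8 * v))) \<partial>P) \<le> ennreal (sqrt 2)"
proof -
  have [measurable]: "(\<lambda>\<omega>. Re (Z \<omega>)) \<in> borel_measurable P" "(\<lambda>\<omega>. Im (Z \<omega>)) \<in> borel_measurable P"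
    using Re(1) Im(1) by (simp_all add: real_gaussian_measurable)
  note iRe = real_gaussian_integrable[OF P Re(1)] and iIm = real_gaussian_integrable[OF P Im(1)]
  have cmod2: "(cmod (Z \<omega>))\<^sup>2 = (Re (Z \<omega>))\<^sup>2 + (Im (Z \<omega>))\<^sup>2" for \<omega>
    by (simp add: cmod_power2)
  have "integral\<^sup>L P (\<lambda>\<omega>. (Re (Z \<omega>))\<^sup>2) \<le> v" "integral\<^sup>L P (\<lambda>\<omega>. (Im (Z \<omega>))\<^sup>2) \<le> v"
    using iRe iIm by (auto intro!: order.trans[OF integral_mono var] simp: cmod2)
  note bRe = real_gaussian_exp_square_le[OF P Re this(1) v]
    and bIm = real_gaussian_exp_square_le[OF P Im this(2) v]
  have "exp ((cmod (Z \<omega>))\<^sup>2 / (8 * v)) \<le>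
      1/2 * exp ((Re (Z \<omega>))\<^sup>2 / (4 * v)) + 1/2 * exp ((Im (Z \<omega>))\<^sup>2 / (4 * v))" for \<omega>
    using exp_add_le_mean_exp_double[of "(Re (Z \<omega>))\<^sup>2 / (8 * v)" "(Im (Z \<omega>))\<^sup>2 / (8 * v)"]
    by (simp add: cmod2 add_divide_distrib)
  then have "ennreal (exp ((cmod (Z \<omega>))\<^sup>2 / (8 * v))) \<le>
      ennreal (1/2) * ennreal (exp ((Re (Z \<omega>))\<^sup>2 / (4 * v)))
      + ennreal (1/2) * ennreal (exp ((Im (Z \<omega>))\<^sup>2 / (4 * v)))" for \<omega>
    by (simp only: ennreal_mult[symmetric] ennreal_plus[symmetric] divide_nonneg_nonneg
        mult_nonneg_nonneg exp_ge_zero zero_le_one zero_le_numeral ennreal_leI)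
  then have "(\<integral>\<^sup>+\<omega>. ennreal (exp ((cmod (Z \<omega>))\<^sup>2 / (8 * v))) \<partial>P) \<le>
      (\<integral>\<^sup>+\<omega>. ennreal (1/2) * ennreal (exp ((Re (Z \<omega>))\<^sup>2 / (4 * v)))
              + ennreal (1/2) * ennreal (exp ((Im (Z \<omega>))\<^sup>2 / (4 * v))) \<partial>P)"
    by (intro nn_integral_mono)
  also have "\<dots> = ennreal (1/2) * (\<integral>\<^sup>+\<omega>. ennreal (exp ((Re (Z \<omega>))\<^sup>2 / (4 * v))) \<partial>P)
      + ennreal (1/2) * (\<integral>\<^sup>+\<omega>. ennreal (exp ((Im (Z \<omega>))\<^sup>2 / (4 * v))) \<partial>P)"
    by (simp add: nn_integral_add nn_integral_cmult)
  also have "\<dots> \<le> ennreal (1/2) * ennreal (sqrt 2) + ennreal (1/2) * ennreal (sqrt 2)"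
    by (intro add_mono mult_left_mono bRe bIm) auto
  also have "\<dots> = ennreal (sqrt 2)"
    using ennreal_plus[of "1/2 * sqrt 2" "1/2 * sqrt 2"] ennreal_mult[of "1/2" "sqrt 2"] by simp
  finally show ?thesis .
qed

section \<open>Circularly symmetric Gaussian series\<close>

lemma borel_measurable_cnj[measurable]:
  fixes f :: "'a \<Rightarrow> complex"
  shows "f \<in> borel_measurable M \<Longrightarrow> (\<lambda>x. cnj (f x)) \<in> borel_measurable M"
  by (rule borel_measurable_continuous_on) (intro continuous_intros)

lemma zm_ccs_gaussian_series_measurable[measurable_dest]:
  "zm_ccs_gaussian_series P x \<Longrightarrow> x t \<in> borel_measurable P"
  by (simp add: zm_ccs_gaussian_series_def)

lemma zm_ccs_gaussian_series_Re_sum: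
  "zm_ccs_gaussian_series P x \<Longrightarrow> finite F \<Longrightarrow> real_gaussian P (\<lambda>\<omega>. Re (\<Sum>n\<in>F. c n * x n \<omega>))"
  unfolding zm_ccs_gaussian_series_def by blast

lemma zm_ccs_gaussian_series_integrable:
  assumes P: "prob_space P" and x: "zm_ccs_gaussian_series P x"
  shows "integrable P (x t)" and "integrable P (\<lambda>\<omega>. (cmod (x t \<omega>))\<^sup>2)"
proof -
  note Re = real_gaussian_integrable[OF P zm_ccs_gaussian_series_Re_sum[OF x, of "{t}" "\<lambda>_. 1"]]
  note Im = real_gaussian_integrable[OF P zm_ccs_gaussian_series_Re_sum[OF x, of "{t}" "\<lambda>_. - \<i>"]]
  have "integrable P (\<lambda>\<omega>. complex_of_real (Re (x t \<omega>)) + \<i> * complex_of_real (Im (x t \<omega>)))"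
    using Re Im by auto
  then show "integrable P (x t)" by (simp add: complex_eq[symmetric])
  have "integrable P (\<lambda>\<omega>. (Re (x t \<omega>))\<^sup>2 + (Im (x t \<omega>))\<^sup>2)"
    using Re Im by simp
  then show "integrable P (\<lambda>\<omega>. (cmod (x t \<omega>))\<^sup>2)" by (simp add: cmod_power2)
qed

lemma zm_ccs_gaussian_series_integrable_mult_cnj:
  assumes P: "prob_space P" and x: "zm_ccs_gaussian_series P x"
  shows "integrable P (\<lambda>\<omega>. x t \<omega> * cnj (x t' \<omega>))"
proof (rule Bochner_Integration.integrable_bound)
  show "integrable P (\<lambda>\<omega>. (cmod (x t \<omega>))\<^sup>2 + (cmod (x t' \<omega>))\<^sup>2)"
    using zm_ccs_gaussian_series_integrable[OF P x] by simp
  show "(\<lambda>\<omega>. x t \<omega> * cnj (x t' \<omega>)) \<in> borel_measurable P"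
    using x by measurable
  have "cmod (x t \<omega>) * cmod (x t' \<omega>) \<le> (cmod (x t \<omega>))\<^sup>2 + (cmod (x t' \<omega>))\<^sup>2" for \<omega>
    using sum_squares_bound[of "cmod (x t \<omega>)" "cmod (x t' \<omega>)"]
      mult_nonneg_nonneg[OF norm_ge_zero norm_ge_zero, of "x t \<omega>" "x t' \<omega>"] by linarith
  then show "AE \<omega> in P. norm (x t \<omega> * cnj (x t' \<omega>)) \<le> norm ((cmod (x t \<omega>))\<^sup>2 + (cmod (x t' \<omega>))\<^sup>2)"
    by (simp add: norm_mult)
qed

lemma sum_norm_diff_le:
  fixes \<rho> :: "int \<Rightarrow> 'b::real_normed_vector"
  assumes "finite T" and "\<And>F. finite F \<Longrightarrow> (\<Sum>d\<in>F. norm (\<rho> d)) \<le> R"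
  shows "(\<Sum>t'\<in>T. norm (\<rho> (t - t'))) \<le> R"
proof -
  have "inj_on (\<lambda>t'. t - t') T" by (auto simp: inj_on_def)
  then have "(\<Sum>t'\<in>T. norm (\<rho> (t - t'))) = (\<Sum>d\<in>(\<lambda>t'. t - t') ` T. norm (\<rho> d))"
    by (simp add: sum.reindex)
  also have "\<dots> \<le> R" using assms by simp
  finally show ?thesis .
qed

lemma zm_ccs_gaussian_series_sum_second_moment_le:
  assumes P: "prob_space P" and x: "zm_ccs_gaussian_series P x"
    and ac: "\<And>n k. integral\<^sup>L P (\<lambda>\<omega>. x (n + k) \<omega> * cnj (x n \<omega>)) = \<rho> k"
    and T: "finite T" and c: "\<And>t. cmod (c t) \<le> 1"
    and R: "\<And>F. finite F \<Longrightarrow> (\<Sum>d\<in>F. cmod (\<rho> d)) \<le> R"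
  shows "integral\<^sup>L P (\<lambda>\<omega>. (cmod (\<Sum>t\<in>T. c t * x t \<omega>))\<^sup>2) \<le> real (card T) * R"
proof -
  define G where "G \<omega> = (\<Sum>t\<in>T. \<Sum>t'\<in>T. (c t * cnj (c t')) * (x t \<omega> * cnj (x t' \<omega>)))" for \<omega>
  have sq: "(cmod (\<Sum>t\<in>T. c t * x t \<omega>))\<^sup>2 = Re (G \<omega>)" for \<omega>
  proof -
    have "complex_of_real ((cmod (\<Sum>t\<in>T. c t * x t \<omega>))\<^sup>2) = G \<omega>"
      unfolding complex_norm_square G_def cnj_sum sum_product
      by (intro sum.cong refl) (simp add: algebra_simps)
    then show ?thesis by (metis Re_complex_of_real)
  qed
  have cross_integrable: "integrable P (\<lambda>\<omega>. x t \<omega> * cnj (x t' \<omega>))" for t t'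
    by (rule zm_ccs_gaussian_series_integrable_mult_cnj[OF P x])
  then have "integrable P G" unfolding G_def by auto
  moreover have "integral\<^sup>L P G = (\<Sum>t\<in>T. \<Sum>t'\<in>T. (c t * cnj (c t')) * \<rho> (t - t'))"
    unfolding G_def using cross_integrable ac[of t' "t - t'" for t t']
    by (simp add: integral_sum integral_mult_right_zero)
  ultimately have "integral\<^sup>L P (\<lambda>\<omega>. (cmod (\<Sum>t\<in>T. c t * x t \<omega>))\<^sup>2)
      = Re (\<Sum>t\<in>T. \<Sum>t'\<in>T. (c t * cnj (c t')) * \<rho> (t - t'))"
    unfolding sq by simp
  also have "\<dots> \<le> (\<Sum>t\<in>T. \<Sum>t'\<in>T. cmod ((c t * cnj (c t')) * \<rho> (t - t')))"
    by (rule order.trans[OF complex_Re_le_cmod order.trans[OF norm_sum sum_mono[OF norm_sum]]])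
  also have "\<dots> \<le> (\<Sum>t\<in>T. \<Sum>t'\<in>T. cmod (\<rho> (t - t')))"
    using c by (intro sum_mono) (simp add: norm_mult mult_le_one mult_left_le_one_le)
  also have "\<dots> \<le> (\<Sum>t\<in>T. R)"
    by (intro sum_mono sum_norm_diff_le[OF T R])
  finally show ?thesis by simp
qed

lemma zm_ccs_gaussian_series_sum_exp_square_le:
  assumes P: "prob_space P" and x: "zm_ccs_gaussian_series P x"
    and ac: "\<And>n k. integral\<^sup>L P (\<lambda>\<omega>. x (n + k) \<omega> * cnj (x n \<omega>)) = \<rho> k"
    and T: "finite T" and c: "\<And>t. cmod (c t) \<le> 1"
    and R: "\<And>F. finite F \<Longrightarrow> (\<Sum>d\<in>F. cmod (\<rho> d)) \<le> R"
    and v: "real (card T) * R \<le> v" "0 < v"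
  shows "(\<integral>\<^sup>+\<omega>. ennreal (exp ((cmod (\<Sum>t\<in>T. c t * x t \<omega>))\<^sup>2 / (8 * v))) \<partial>P) \<le> ennreal (sqrt 2)"
proof -
  define Z where "Z \<omega> = (\<Sum>t\<in>T. c t * x t \<omega>)" for \<omega>
  have "integrable P (x t)" "integral\<^sup>L P (x t) = 0" for t
    using zm_ccs_gaussian_series_integrable(1)[OF P x] x by (auto simp: zm_ccs_gaussian_series_def)
  then have "integrable P Z" "integral\<^sup>L P Z = 0"
    unfolding Z_def by (auto simp: integral_sum)
  then have "integral\<^sup>L P (\<lambda>\<omega>. Re (Z \<omega>)) = 0" "integral\<^sup>L P (\<lambda>\<omega>. Im (Z \<omega>)) = 0"
    by simp_all
  moreover have "real_gaussian P (\<lambda>\<omega>. Re (Z \<omega>))"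
    unfolding Z_def by (rule zm_ccs_gaussian_series_Re_sum[OF x T])
  moreover have "Im (Z \<omega>) = Re (\<Sum>t\<in>T. (- \<i> * c t) * x t \<omega>)" for \<omega>
    unfolding Z_def by (simp add: sum_distrib_left algebra_simps)
  then have "real_gaussian P (\<lambda>\<omega>. Im (Z \<omega>))"
    by (simp only: zm_ccs_gaussian_series_Re_sum[OF x T])
  moreover have "integral\<^sup>L P (\<lambda>\<omega>. (cmod (Z \<omega>))\<^sup>2) \<le> v"
    unfolding Z_def using zm_ccs_gaussian_series_sum_second_moment_le[where c=c, OF P x ac T c R] v(1) by linarith
  ultimately have "(\<integral>\<^sup>+\<omega>. ennreal (exp ((cmod (Z \<omega>))\<^sup>2 / (8 * v))) \<partial>P) \<le> ennreal (sqrt 2)"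
    using complex_gaussian_exp_square_le[OF P _ _ _ _ _ v(2)] by blast
  then show ?thesis unfolding Z_def .
qed

lemma chernoff_sum_cmod_square:
  assumes P: "prob_space P"
    and x: "\<And>m. m \<ge> 1 \<Longrightarrow> zm_ccs_gaussian_series P (y m)"
    and ac: "\<And>m n k. m \<ge> 1 \<Longrightarrow> integral\<^sup>L P (\<lambda>\<omega>. y m (n + k) \<omega> * cnj (y m n \<omega>)) = r m k"
    and indep: "prob_space.indep_vars P (\<lambda>_. Pi\<^sub>M (UNIV :: int set) (\<lambda>_. borel))
                  (\<lambda>m \<omega>. \<lambda>n. y m n \<omega>) {1..}"
    and T: "finite T" and c: "\<And>t. cmod (c t) \<le> 1"
    and R: "\<And>m F. m \<ge> 1 \<Longrightarrow> finite F \<Longrightarrow> (\<Sum>d\<in>F. cmod (r m d)) \<le> R"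
    and v: "real (card T) * R \<le> v" "0 < v"
  shows "measure P {\<omega> \<in> space P. s < (\<Sum>m\<in>{1..M}. (cmod (\<Sum>t\<in>T. c t * y m t \<omega>))\<^sup>2)}
           \<le> exp (- s / (8 * v)) * sqrt 2 ^ M"
proof -
  interpret prob_space P by fact
  define g where "g h = ennreal (exp ((cmod (\<Sum>t\<in>T. c t * h t))\<^sup>2 / (8 * v)))" for h :: "int \<Rightarrow> complex"
  define W where "W \<omega> = (\<Sum>m\<in>{1..M}. (cmod (\<Sum>t\<in>T. c t * y m t \<omega>))\<^sup>2)" for \<omega>
  have [measurable]: "y m t \<in> borel_measurable P" if "m \<in> {1..M}" for m t
    using x that by auto
  have [measurable]: "W \<in> borel_measurable P"
    unfolding W_def by measurable
  have "g \<in> borel_measurable (Pi\<^sub>M UNIV (\<lambda>_. borel))"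
    unfolding g_def by measurable
  then have g_indep: "indep_vars (\<lambda>_. borel) (\<lambda>m \<omega>. g (\<lambda>n. y m n \<omega>)) {1..M}"
    by (intro indep_vars_compose2[OF indep_vars_subset[OF indep]]) auto
  have "emeasure P {\<omega> \<in> space P. s < W \<omega>} \<le> emeasure P {\<omega> \<in> space P. s \<le> W \<omega>}"
    by (intro emeasure_mono) auto
  also have "\<dots> \<le> ennreal (exp (- (1 / (8 * v)) * s)) *
      (\<integral>\<^sup>+\<omega>. ennreal (exp (1 / (8 * v) * W \<omega>)) * indicator (space P) \<omega> \<partial>P)"
    using v(2) by (intro Chernoff_ineq_nn_integral_ge) auto
  also have "(\<integral>\<^sup>+\<omega>. ennreal (exp (1 / (8 * v) * W \<omega>)) * indicator (space P) \<omega> \<partial>P)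
      = (\<integral>\<^sup>+\<omega>. (\<Prod>m\<in>{1..M}. g (\<lambda>n. y m n \<omega>)) \<partial>P)"
    unfolding W_def g_def
    by (intro nn_integral_cong) (simp add: prod_ennreal exp_sum sum_divide_distrib)
  also have "\<dots> = (\<Prod>m\<in>{1..M}. \<integral>\<^sup>+\<omega>. g (\<lambda>n. y m n \<omega>) \<partial>P)"
    by (rule indep_vars_nn_integral[OF _ g_indep]) auto
  also have "\<dots> \<le> (\<Prod>m\<in>{1..M}. ennreal (sqrt 2))"
    unfolding g_def
    by (intro prod_mono_ennreal zm_ccs_gaussian_series_sum_exp_square_le[OF P x ac T c R v]) auto
  finally have "ennreal (measure P {\<omega> \<in> space P. s < W \<omega>}) \<le> ennreal (exp (- s / (8 * v)) * sqrt 2 ^ M)"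
    by (simp add: emeasure_eq_measure ennreal_mult ennreal_power mult_left_mono)
  then show ?thesis unfolding W_def by simp
qed

section \<open>Discrete Fourier transform\<close>

definition dft_exp :: "nat \<Rightarrow> nat \<Rightarrow> int \<Rightarrow> complex" where
  "dft_exp K k s = cis (2 * pi * real k * real_of_int s / real K)"

lemma dft_exp_mult_cnj: "dft_exp K k s * cnj (dft_exp K k s') = dft_exp K k (s - s')"
  unfolding dft_exp_def by (simp add: cis_cnj cis_mult diff_divide_distrib algebra_simps)

lemma dft_exp_add: "dft_exp K k (s + s') = dft_exp K k s * dft_exp K k s'"
  unfolding dft_exp_def by (simp add: cis_mult add_divide_distrib algebra_simps)

lemma norm_dft_exp[simp]: "cmod (dft_exp K k s) = 1"
  unfolding dft_exp_def by simp

lemma sum_dft_exp: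
  assumes K: "0 < K" and d: "\<bar>d\<bar> < int K"
  shows "(\<Sum>k<K. dft_exp K k d) = (if d = 0 then of_nat K else 0)"
proof (cases "d = 0")
  case True
  then show ?thesis by (simp add: dft_exp_def)
next
  case False
  define z where "z = cis (2 * pi * real_of_int d / real K)"
  have zk: "dft_exp K k d = z ^ k" for k
  proof -
    have "z ^ k = cis (real k * (2 * pi * real_of_int d / real K))" unfolding z_def by (rule Complex.DeMoivre)
    also have "real k * (2 * pi * real_of_int d / real K) = 2 * pi * real k * real_of_int d / real K" by simp
    finally show ?thesis unfolding dft_exp_def by (simp add: mult.commute mult.left_commute)
  qed
  have z1: "z \<noteq> 1"
  proof
    assume "z = 1"
    then have "cos (2 * pi * real_of_int d / real K) = 1"
      unfolding z_def by (metis cis.sel(1) one_complex.sel(1))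
    then obtain n :: int where n: "2 * pi * real_of_int d / real K = real_of_int n * 2 * pi"
      by (auto simp: cos_one_2pi_int)
    then have "real_of_int d = real_of_int n * real K" using K by (simp add: field_simps)
    then have dn: "d = n * int K" by (metis of_int_eq_iff of_int_mult of_int_of_nat_eq)
    with False have "1 \<le> \<bar>n\<bar>" by auto
    then have "int K \<le> \<bar>n\<bar> * int K"
      using mult_right_mono[of 1 "\<bar>n\<bar>" "int K"] by simp
    with d dn show False by (simp add: abs_mult)
  qed
  have zK: "z ^ K = 1"
  proof -
    have "z ^ K = cis (real K * (2 * pi * real_of_int d / real K))" unfolding z_def by (rule Complex.DeMoivre)
    also have "real K * (2 * pi * real_of_int d / real K) = 2 * pi * real_of_int d" using K by simp
    also have "cis (2 * pi * real_of_int d) = 1" by simp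
    finally show ?thesis .
  qed
  have "(\<Sum>k<K. dft_exp K k d) = (\<Sum>k<K. z ^ k)" by (simp add: zk)
  also have "\<dots> = 0" using z1 zK by (simp add: geometric_sum)
  finally show ?thesis using False by simp
qed

lemma dft_parseval:
  fixes f :: "'i \<Rightarrow> complex" and \<phi> :: "'i \<Rightarrow> int"
  assumes K: "0 < K" and fin: "finite I" and inj: "inj_on \<phi> I"
    and dif: "\<And>i j. i \<in> I \<Longrightarrow> j \<in> I \<Longrightarrow> \<bar>\<phi> i - \<phi> j\<bar> < int K"
  shows "(\<Sum>k<K. (cmod (\<Sum>i\<in>I. f i * dft_exp K k (\<phi> i)))\<^sup>2) = real K * (\<Sum>i\<in>I. (cmod (f i))\<^sup>2)"
proof -
  have "complex_of_real (\<Sum>k<K. (cmod (\<Sum>i\<in>I. f i * dft_exp K k (\<phi> i)))\<^sup>2)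
      = (\<Sum>k<K. (\<Sum>i\<in>I. f i * dft_exp K k (\<phi> i)) * cnj (\<Sum>i\<in>I. f i * dft_exp K k (\<phi> i)))"
    unfolding of_real_sum complex_norm_square ..
  also have "\<dots> = (\<Sum>k<K. \<Sum>i\<in>I. \<Sum>j\<in>I. f i * cnj (f j) * dft_exp K k (\<phi> i - \<phi> j))"
    by (simp add: cnj_sum sum_product dft_exp_mult_cnj[symmetric] algebra_simps)
  also have "\<dots> = (\<Sum>i\<in>I. \<Sum>j\<in>I. f i * cnj (f j) * (\<Sum>k<K. dft_exp K k (\<phi> i - \<phi> j)))"
    by (simp add: sum_distrib_left sum.swap[of _ "{..<K}"])
  also have "\<dots> = (\<Sum>i\<in>I. \<Sum>j\<in>I. if j = i then f i * cnj (f i) * of_nat K else 0)"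
  proof (intro sum.cong refl)
    fix i j assume ij: "i \<in> I" "j \<in> I"
    have "(\<phi> i - \<phi> j = 0) = (j = i)" using inj ij by (auto dest: inj_onD)
    then show "f i * cnj (f j) * (\<Sum>k<K. dft_exp K k (\<phi> i - \<phi> j)) = (if j = i then f i * cnj (f i) * of_nat K else 0)"
      using sum_dft_exp[OF K dif[OF ij]] by auto
  qed
  also have "\<dots> = (\<Sum>i\<in>I. f i * cnj (f i) * of_nat K)"
    using fin by (simp add: sum.delta)
  also have "\<dots> = complex_of_real (real K * (\<Sum>i\<in>I. (cmod (f i))\<^sup>2))"
  proof -
    have "complex_of_real (real K * (\<Sum>i\<in>I. (cmod (f i))\<^sup>2)) = of_nat K * (\<Sum>i\<in>I. f i * cnj (f i))"
      by (simp only: of_real_mult of_real_sum complex_norm_square of_real_of_nat_eq)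
    then show ?thesis by (simp add: sum_distrib_left mult.commute)
  qed
  finally show ?thesis by (simp only: of_real_eq_iff)
qed

lemma cmod_sum_mult_square_le:
  fixes b y :: "'m \<Rightarrow> complex"
  shows "(cmod (\<Sum>m\<in>A. b m * y m))\<^sup>2 \<le> (\<Sum>m\<in>A. (cmod (b m))\<^sup>2) * (\<Sum>m\<in>A. (cmod (y m))\<^sup>2)"
proof -
  have "cmod (\<Sum>m\<in>A. b m * y m) \<le> (\<Sum>m\<in>A. cmod (b m * y m))" by (rule norm_sum)
  also have "\<dots> = (\<Sum>m\<in>A. \<bar>cmod (b m)\<bar> * \<bar>cmod (y m)\<bar>)" by (simp add: norm_mult)
  also have "\<dots> \<le> L2_set (\<lambda>m. cmod (b m)) A * L2_set (\<lambda>m. cmod (y m)) A" by (rule L2_set_mult_ineq)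
  finally have h: "cmod (\<Sum>m\<in>A. b m * y m) \<le> L2_set (\<lambda>m. cmod (b m)) A * L2_set (\<lambda>m. cmod (y m)) A" .
  have "(cmod (\<Sum>m\<in>A. b m * y m))\<^sup>2 \<le> (L2_set (\<lambda>m. cmod (b m)) A * L2_set (\<lambda>m. cmod (y m)) A)\<^sup>2"
    by (rule power_mono[OF h]) simp
  also have "\<dots> = (\<Sum>m\<in>A. (cmod (b m))\<^sup>2) * (\<Sum>m\<in>A. (cmod (y m))\<^sup>2)"
    unfolding L2_set_def power_mult_distrib by (simp add: sum_nonneg)
  finally show ?thesis .
qed

section \<open>Operator norms of Gram matrices\<close>

lemma opnorm_le:
  assumes "0 \<le> \<alpha>"
    and "\<And>x. L2_set (\<lambda>i. cmod (\<Sum>j\<in>J. A i j * x j)) I \<le> \<alpha> * L2_set (\<lambda>j. cmod (x j)) J"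
  shows "opnorm I J A \<le> \<alpha>"
  unfolding opnorm_def
proof (rule cSup_least)
  show "{sqrt (\<Sum>i\<in>I. (cmod (\<Sum>j\<in>J. A i j * x j))\<^sup>2) | x. (\<Sum>j\<in>J. (cmod (x j))\<^sup>2) \<le> 1} \<noteq> {}"
    by (auto intro!: exI[of _ "\<lambda>_. 0"])
next
  fix v assume "v \<in> {sqrt (\<Sum>i\<in>I. (cmod (\<Sum>j\<in>J. A i j * x j))\<^sup>2) | x. (\<Sum>j\<in>J. (cmod (x j))\<^sup>2) \<le> 1}"
  then obtain x where v: "v = L2_set (\<lambda>i. cmod (\<Sum>j\<in>J. A i j * x j)) I"
    and x: "L2_set (\<lambda>j. cmod (x j)) J \<le> 1"
    unfolding L2_set_def by auto
  have "v \<le> \<alpha> * L2_set (\<lambda>j. cmod (x j)) J" unfolding v by (rule assms(2))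
  also have "\<dots> \<le> \<alpha>" using mult_left_mono[OF x assms(1)] by simp
  finally show "v \<le> \<alpha>" .
qed

lemma gram_L2_le:
  fixes V :: "'i \<Rightarrow> 'j \<Rightarrow> complex"
  assumes "0 \<le> \<beta>"
    and adjoint_le: "\<And>z. (\<Sum>j\<in>J. (cmod (\<Sum>i\<in>I. cnj (V i j) * z i))\<^sup>2) \<le> \<beta> * (\<Sum>i\<in>I. (cmod (z i))\<^sup>2)"
  shows "L2_set (\<lambda>i. cmod (\<Sum>i'\<in>I. gram J V i i' * x i')) I \<le> \<beta> * L2_set (\<lambda>i. cmod (x i)) I"
proof -
  define adj where "adj z j = (\<Sum>i\<in>I. cnj (V i j) * z i)" for z j
  define y where "y i = (\<Sum>i'\<in>I. gram J V i i' * x i')" for i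
  define norm_y where "norm_y = L2_set (\<lambda>i. cmod (y i)) I"
  have adj_le: "L2_set (\<lambda>j. cmod (adj z j)) J \<le> sqrt \<beta> * L2_set (\<lambda>i. cmod (z i)) I" for z
    unfolding L2_set_def adj_def using real_sqrt_le_mono[OF adjoint_le]
    by (simp add: real_sqrt_mult)
  have "norm_y\<^sup>2 = (\<Sum>i\<in>I. (cmod (y i))\<^sup>2)"
    unfolding norm_y_def L2_set_def by (simp add: sum_nonneg)
  then have "complex_of_real (norm_y\<^sup>2) = (\<Sum>i\<in>I. y i * cnj (y i))"
    by (simp only: of_real_sum complex_norm_square)
  also have "\<dots> = (\<Sum>i\<in>I. \<Sum>j\<in>J. adj x j * (V i j * cnj (y i)))"
  proof (rule sum.cong[OF refl])
    fix i
    have "y i = (\<Sum>j\<in>J. V i j * adj x j)"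
      unfolding y_def adj_def gram_def
      by (simp add: sum_distrib_left sum_distrib_right sum.swap[of _ I] mult.assoc)
    then show "y i * cnj (y i) = (\<Sum>j\<in>J. adj x j * (V i j * cnj (y i)))"
      by (simp add: sum_distrib_right mult_ac)
  qed
  also have "\<dots> = (\<Sum>j\<in>J. \<Sum>i\<in>I. adj x j * (V i j * cnj (y i)))"
    by (rule sum.swap)
  also have "\<dots> = (\<Sum>j\<in>J. adj x j * cnj (adj y j))"
    by (simp add: adj_def[of y] sum_distrib_left)
  finally have "complex_of_real (norm_y\<^sup>2) = (\<Sum>j\<in>J. adj x j * cnj (adj y j))" .
  then have "norm_y\<^sup>2 = cmod (\<Sum>j\<in>J. adj x j * cnj (adj y j))"
    by (metis abs_power2 norm_of_real)
  also have "\<dots> \<le> L2_set (\<lambda>j. cmod (adj x j)) J * L2_set (\<lambda>j. cmod (adj y j)) J"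
    using L2_set_mult_ineq[of "\<lambda>j. cmod (adj x j)" "\<lambda>j. cmod (adj y j)" J]
    by (intro order.trans[OF norm_sum]) (simp add: norm_mult)
  also have "\<dots> \<le> (sqrt \<beta> * L2_set (\<lambda>i. cmod (x i)) I) * (sqrt \<beta> * norm_y)"
    unfolding norm_y_def using assms(1) by (intro mult_mono adj_le) auto
  also have "\<dots> = (\<beta> * L2_set (\<lambda>i. cmod (x i)) I) * norm_y"
    using assms(1) by (simp add: algebra_simps)
  finally have "norm_y * norm_y \<le> (\<beta> * L2_set (\<lambda>i. cmod (x i)) I) * norm_y"
    by (simp add: power2_eq_square)
  moreover have "0 \<le> \<beta> * L2_set (\<lambda>i. cmod (x i)) I" "0 \<le> norm_y"
    using assms(1) by (simp_all add: norm_y_def)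
  ultimately have "norm_y \<le> \<beta> * L2_set (\<lambda>i. cmod (x i)) I"
    by (cases "norm_y = 0") (auto intro: mult_right_le_imp_le)
  then show ?thesis unfolding norm_y_def y_def .
qed

lemma dft_shifted_window:
  fixes a :: "int \<Rightarrow> complex"
  assumes supp: "\<And>t. t < p \<or> q < t \<Longrightarrow> a t = 0" and l: "1 \<le> l" "l \<le> L"
  shows "(\<Sum>s\<in>{p - int L..q - 1}. cnj (a (s + int l)) * dft_exp K k s)
       = dft_exp K k (- int l) * (\<Sum>t\<in>{p..q}. cnj (a t) * dft_exp K k t)"
proof -
  let ?R = "{p - int L..q - 1}"
  have shift: "dft_exp K k s = dft_exp K k (- int l) * dft_exp K k (s + int l)" for s
    using dft_exp_add[of K k "s + int l" "- int l"] by (simp add: mult.commute)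
  have "(\<Sum>s\<in>?R. cnj (a (s + int l)) * dft_exp K k s)
      = dft_exp K k (- int l) * (\<Sum>s\<in>?R. cnj (a (s + int l)) * dft_exp K k (s + int l))"
    unfolding sum_distrib_left by (intro sum.cong refl) (subst shift, simp only: mult_ac)
  also have "(\<Sum>s\<in>?R. cnj (a (s + int l)) * dft_exp K k (s + int l))
      = (\<Sum>t\<in>(\<lambda>s. s + int l) ` ?R. cnj (a t) * dft_exp K k t)"
    by (subst sum.reindex) (auto simp: inj_on_def)
  also have "\<dots> = (\<Sum>t\<in>{p..q}. cnj (a t) * dft_exp K k t)"
    by (rule sum.mono_neutral_right) (use l supp in auto)
  finally show ?thesis .
qed

lemma dft_block_hankel:
  fixes a :: "nat \<Rightarrow> int \<Rightarrow> complex" and x :: "nat \<times> nat \<Rightarrow> complex"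
  assumes supp: "\<And>m t. t < p \<or> q < t \<Longrightarrow> a m t = 0"
  shows "(\<Sum>s\<in>{p - int L..q - 1}.
            (\<Sum>i\<in>{1..L}\<times>{1..M}. cnj (a (snd i) (s + int (fst i))) * x i) * dft_exp K k s)
       = (\<Sum>m\<in>{1..M}. (\<Sum>t\<in>{p..q}. cnj (a m t) * dft_exp K k t)
                        * (\<Sum>l\<in>{1..L}. x (l, m) * dft_exp K k (- int l)))"
proof -
  let ?R = "{p - int L..q - 1}"
  have "(\<Sum>s\<in>?R. (\<Sum>i\<in>{1..L}\<times>{1..M}. cnj (a (snd i) (s + int (fst i))) * x i) * dft_exp K k s)
      = (\<Sum>i\<in>{1..L}\<times>{1..M}. x i * (\<Sum>s\<in>?R. cnj (a (snd i) (s + int (fst i))) * dft_exp K k s))"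
    by (simp add: sum_distrib_left sum_distrib_right sum.swap[of _ ?R] algebra_simps)
  also have "\<dots> = (\<Sum>i\<in>{1..L}\<times>{1..M}.
      x i * (dft_exp K k (- int (fst i)) * (\<Sum>t\<in>{p..q}. cnj (a (snd i) t) * dft_exp K k t)))"
  proof (intro sum.cong refl)
    fix i assume "i \<in> {1..L}\<times>{1..M}"
    then show "x i * (\<Sum>s\<in>?R. cnj (a (snd i) (s + int (fst i))) * dft_exp K k s)
        = x i * (dft_exp K k (- int (fst i)) * (\<Sum>t\<in>{p..q}. cnj (a (snd i) t) * dft_exp K k t))"
      using dft_shifted_window[where a="a (snd i)" and l="fst i" and L=L, OF supp] by auto
  qed
  also have "\<dots> = (\<Sum>l\<in>{1..L}. \<Sum>m\<in>{1..M}.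
      x (l, m) * (dft_exp K k (- int l) * (\<Sum>t\<in>{p..q}. cnj (a m t) * dft_exp K k t)))"
    by (simp add: sum.cartesian_product case_prod_unfold)
  also have "\<dots> = (\<Sum>m\<in>{1..M}. (\<Sum>t\<in>{p..q}. cnj (a m t) * dft_exp K k t)
                        * (\<Sum>l\<in>{1..L}. x (l, m) * dft_exp K k (- int l)))"
    by (subst sum.swap) (simp add: sum_distrib_left sum_distrib_right algebra_simps)
  finally show ?thesis .
qed

text \<open>A block-Hankel matrix acts by convolution. A DFT whose length exceeds the width of the
  support is exact (Parseval) and turns that convolution into the products of
  \<open>dft_block_hankel\<close>, which Cauchy-Schwarz bounds frequency by frequency.\<close>

lemma block_hankel_adjoint_le:
  fixes a :: "nat \<Rightarrow> int \<Rightarrow> complex" and x :: "nat \<times> nat \<Rightarrow> complex"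
  assumes K: "L < K" "q - p + int L < int K" and S: "finite S"
    and supp: "\<And>m t. t < p \<or> q < t \<Longrightarrow> a m t = 0"
    and dft_le: "\<And>k. k < K \<Longrightarrow> (\<Sum>m\<in>{1..M}. (cmod (\<Sum>t\<in>{p..q}. cnj (a m t) * dft_exp K k t))\<^sup>2) \<le> \<beta>"
  shows "(\<Sum>s\<in>S. (cmod (\<Sum>i\<in>{1..L}\<times>{1..M}. cnj (a (snd i) (s + int (fst i))) * x i))\<^sup>2)
           \<le> \<beta> * (\<Sum>i\<in>{1..L}\<times>{1..M}. (cmod (x i))\<^sup>2)"
proof -
  define u where "u s = (\<Sum>i\<in>{1..L}\<times>{1..M}. cnj (a (snd i) (s + int (fst i))) * x i)" for s
  define R where "R = {p - int L..q - 1}"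
  define B where "B m k = (\<Sum>t\<in>{p..q}. cnj (a m t) * dft_exp K k t)" for m k
  define X where "X m k = (\<Sum>l\<in>{1..L}. x (l, m) * dft_exp K k (- int l))" for m k
  have K0: "0 < K" using K(1) by simp
  have "(\<Sum>s\<in>S. (cmod (u s))\<^sup>2) \<le> (\<Sum>s\<in>S \<union> R. (cmod (u s))\<^sup>2)"
    by (rule sum_mono2) (use S in \<open>auto simp: R_def\<close>)
  also have "\<dots> = (\<Sum>s\<in>R. (cmod (u s))\<^sup>2)"
  proof (rule sum.mono_neutral_right)
    show "\<forall>s\<in>S \<union> R - R. (cmod (u s))\<^sup>2 = 0"
      unfolding u_def R_def using supp by (auto intro!: sum.neutral)
  qed (use S in \<open>auto simp: R_def\<close>)
  also have "\<dots> = (\<Sum>k<K. (cmod (\<Sum>s\<in>R. u s * dft_exp K k s))\<^sup>2) / real K"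
    using dft_parseval[OF K0, of R "\<lambda>s. s" u] K(2) K0 by (simp add: R_def abs_less_iff)
  also have "\<dots> = (\<Sum>k<K. (cmod (\<Sum>m\<in>{1..M}. B m k * X m k))\<^sup>2) / real K"
    using dft_block_hankel[where a=a and p=p and q=q and L=L and M=M and x=x and K=K, OF supp]
    unfolding R_def u_def B_def X_def by (simp only:)
  also have "\<dots> \<le> (\<Sum>k<K. \<beta> * (\<Sum>m\<in>{1..M}. (cmod (X m k))\<^sup>2)) / real K"
  proof (intro divide_right_mono sum_mono)
    fix k assume "k \<in> {..<K}"
    have "(cmod (\<Sum>m\<in>{1..M}. B m k * X m k))\<^sup>2
        \<le> (\<Sum>m\<in>{1..M}. (cmod (B m k))\<^sup>2) * (\<Sum>m\<in>{1..M}. (cmod (X m k))\<^sup>2)"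
      by (rule cmod_sum_mult_square_le)
    also have "\<dots> \<le> \<beta> * (\<Sum>m\<in>{1..M}. (cmod (X m k))\<^sup>2)"
      using dft_le \<open>k \<in> {..<K}\<close> unfolding B_def by (intro mult_right_mono) (auto simp: sum_nonneg)
    finally show "(cmod (\<Sum>m\<in>{1..M}. B m k * X m k))\<^sup>2 \<le> \<beta> * (\<Sum>m\<in>{1..M}. (cmod (X m k))\<^sup>2)" .
  qed simp
  also have "\<dots> = \<beta> * (\<Sum>m\<in>{1..M}. \<Sum>k<K. (cmod (X m k))\<^sup>2) / real K"
    by (simp add: sum_distrib_left sum.swap[of _ "{..<K}"])
  also have "\<dots> = \<beta> * (\<Sum>m\<in>{1..M}. \<Sum>l\<in>{1..L}. (cmod (x (l, m)))\<^sup>2)"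
    unfolding X_def using dft_parseval[OF K0, of "{1..L}" "\<lambda>l. - int l"] K(1) K0
    by (simp add: inj_on_def abs_less_iff sum_distrib_left[symmetric])
  also have "\<dots> = \<beta> * (\<Sum>i\<in>{1..L}\<times>{1..M}. (cmod (x i))\<^sup>2)"
    by (subst sum.swap) (simp add: sum.cartesian_product case_prod_unfold)
  finally show ?thesis unfolding u_def .
qed

section \<open>The edge blocks of the Gram difference\<close>

text \<open>Indexing the columns of \<open>W_mat\<close> and \<open>Wt_mat\<close> by the time shift \<open>s\<close>, the entry in
  row \<open>(l, m)\<close> is \<open>y\<^sub>m (s + l) / sqrt N\<close> if the sample \<open>s + l\<close> passes the mask \<open>ch\<close>,
  and \<open>0\<close> otherwise (the zero padding of \<open>Wt_mat\<close>).\<close>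

definition lag_mat ::
    "(nat \<Rightarrow> int \<Rightarrow> 'a \<Rightarrow> complex) \<Rightarrow> nat \<Rightarrow> (int \<Rightarrow> bool) \<Rightarrow> 'a \<Rightarrow> nat \<times> nat \<Rightarrow> int \<Rightarrow> complex" where
  "lag_mat y N ch \<omega> i s =
     (if ch (s + int (fst i)) then y (snd i) (s + int (fst i)) \<omega> / complex_of_real (sqrt (real N)) else 0)"

definition window_energy ::
    "(nat \<Rightarrow> int \<Rightarrow> 'a \<Rightarrow> complex) \<Rightarrow> nat \<Rightarrow> nat \<Rightarrow> int \<Rightarrow> int \<Rightarrow> (int \<Rightarrow> bool) \<Rightarrow> nat \<Rightarrow> 'a \<Rightarrow> real" where
  "window_energy y M K p q ch k \<omega> =
     (\<Sum>m\<in>{1..M}. (cmod (\<Sum>t\<in>{p..q}. (if ch t then cnj (dft_exp K k t) else 0) * y m t \<omega>))\<^sup>2)"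

lemma window_gram_L2_le:
  assumes N: "0 < N" and L: "1 \<le> L" and \<beta>: "0 \<le> \<beta>" and S: "finite S"
    and window: "\<And>s l. s \<in> S \<Longrightarrow> 1 \<le> l \<Longrightarrow> l \<le> L \<Longrightarrow> p \<le> s + int l \<and> s + int l \<le> q"
    and width: "q - p + int L < int (3 * L)"
    and energy: "\<And>k. k < 3 * L \<Longrightarrow> window_energy y M (3 * L) p q ch k \<omega> \<le> real N * \<beta>"
  shows "L2_set (\<lambda>i. cmod (\<Sum>i'\<in>{1..L}\<times>{1..M}. gram S (lag_mat y N ch \<omega>) i i' * x i')) ({1..L}\<times>{1..M})
           \<le> \<beta> * L2_set (\<lambda>i. cmod (x i)) ({1..L}\<times>{1..M})"
proof -
  define I where "I = {1..L}\<times>{1..M}"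
  define a where "a m t = (if p \<le> t \<and> t \<le> q \<and> ch t then y m t \<omega> / complex_of_real (sqrt (real N)) else 0)"
    for m t
  define V where "V i s = a (snd i) (s + int (fst i))" for i s
  have "lag_mat y N ch \<omega> i s = V i s" if "i \<in> I" "s \<in> S" for i s
    using window[OF that(2)] that(1) unfolding I_def V_def a_def lag_mat_def by auto
  then have gram_eq: "gram S (lag_mat y N ch \<omega>) i i' = gram S V i i'" if "i \<in> I" "i' \<in> I" for i i'
    unfolding gram_def using that by simp
  have "(\<Sum>m\<in>{1..M}. (cmod (\<Sum>t\<in>{p..q}. cnj (a m t) * dft_exp (3 * L) k t))\<^sup>2)
      = window_energy y M (3 * L) p q ch k \<omega> / real N" for k
  proof -
    have "cmod (\<Sum>t\<in>{p..q}. cnj (a m t) * dft_exp (3 * L) k t)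
        = cmod (\<Sum>t\<in>{p..q}. (if ch t then cnj (dft_exp (3 * L) k t) else 0) * y m t \<omega>) / sqrt (real N)" for m
    proof -
      have "(\<Sum>t\<in>{p..q}. cnj (a m t) * dft_exp (3 * L) k t)
          = cnj ((\<Sum>t\<in>{p..q}. (if ch t then cnj (dft_exp (3 * L) k t) else 0) * y m t \<omega>)
                   / complex_of_real (sqrt (real N)))"
        unfolding a_def by (simp add: sum_divide_distrib if_distrib if_distribR mult.commute cong: if_cong)
      then show ?thesis by (simp only: complex_mod_cnj norm_divide norm_of_real) simp
    qed
    then show ?thesis
      unfolding window_energy_def using N by (simp add: power_divide sum_divide_distrib)
  qed
  then have dft_le: "(\<Sum>m\<in>{1..M}. (cmod (\<Sum>t\<in>{p..q}. cnj (a m t) * dft_exp (3 * L) k t))\<^sup>2) \<le> \<beta>"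
    if "k < 3 * L" for k
    using energy[OF that] N by (simp add: divide_le_eq mult.commute)
  have supp: "a m t = 0" if "t < p \<or> q < t" for m t
    using that unfolding a_def by auto
  have "(\<Sum>s\<in>S. (cmod (\<Sum>i\<in>I. cnj (V i s) * z i))\<^sup>2) \<le> \<beta> * (\<Sum>i\<in>I. (cmod (z i))\<^sup>2)" for z
    unfolding V_def I_def
    by (rule block_hankel_adjoint_le[where K="3 * L", OF _ width S supp dft_le]) (use L in auto)
  then have "L2_set (\<lambda>i. cmod (\<Sum>i'\<in>I. gram S V i i' * x i')) I \<le> \<beta> * L2_set (\<lambda>i. cmod (x i)) I"
    by (rule gram_L2_le[OF \<beta>])
  moreover have "L2_set (\<lambda>i. cmod (\<Sum>i'\<in>I. gram S (lag_mat y N ch \<omega>) i i' * x i')) I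
      = L2_set (\<lambda>i. cmod (\<Sum>i'\<in>I. gram S V i i' * x i')) I"
    by (intro L2_set_cong refl arg_cong[where f=cmod] sum.cong) (simp add: gram_eq)
  ultimately show ?thesis unfolding I_def by simp
qed

lemma sum_nat_shift:
  fixes g :: "int \<Rightarrow> 'b::comm_monoid_add" and a :: int
  shows "(\<Sum>n\<in>{lo..hi}. g (int n - a)) = (\<Sum>s\<in>{int lo - a..int hi - a}. g s)"
  by (rule sum.reindex_bij_witness[where i="\<lambda>s. nat (s + a)" and j="\<lambda>n. int n - a"]) auto

lemma gram_W_mat_eq_lag_mat:
  "gram {1..N} (W_mat y N \<omega>) i i' = gram {0..int N - 1} (lag_mat y N (\<lambda>_. True) \<omega>) i i'"
proof -
  let ?V = "lag_mat y N (\<lambda>_. True) \<omega>"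
  have "gram {1..N} (W_mat y N \<omega>) i i' = (\<Sum>n\<in>{1..N}. (\<lambda>s. ?V i s * cnj (?V i' s)) (int n - 1))"
    unfolding gram_def W_mat_def lag_mat_def by (simp add: algebra_simps)
  also have "\<dots> = (\<Sum>s\<in>{int 1 - 1..int N - 1}. ?V i s * cnj (?V i' s))"
    by (rule sum_nat_shift)
  finally show ?thesis unfolding gram_def by simp
qed

lemma gram_Wt_mat_eq_lag_mat:
  assumes "1 \<le> L"
  shows "gram {1..N + L - 1} (Wt_mat y N L \<omega>) i i'
       = gram {1 - int L..int N - 1} (lag_mat y N (\<lambda>t. 1 \<le> t \<and> t \<le> int N) \<omega>) i i'"
proof -
  let ?V = "lag_mat y N (\<lambda>t. 1 \<le> t \<and> t \<le> int N) \<omega>"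
  have "int n - int L + int l = int n + int l - int L" for n l by simp
  then have "gram {1..N + L - 1} (Wt_mat y N L \<omega>) i i'
      = (\<Sum>n\<in>{1..N + L - 1}. (\<lambda>s. ?V i s * cnj (?V i' s)) (int n - int L))"
    unfolding gram_def Wt_mat_def lag_mat_def Let_def by (simp add: algebra_simps cong: if_cong)
  also have "\<dots> = (\<Sum>s\<in>{int 1 - int L..int (N + L - 1) - int L}. ?V i s * cnj (?V i' s))"
    by (rule sum_nat_shift)
  also have "{int 1 - int L..int (N + L - 1) - int L} = {1 - int L..int N - 1}"
    using assms by auto
  finally show ?thesis unfolding gram_def .
qed

text \<open>On the columns \<open>0 \<le> s \<le> N - L\<close> no sample is masked, so the two Gram sums cancel there.\<close>

lemma gram_lag_mat_diff_eq_edges: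
  fixes y :: "nat \<Rightarrow> int \<Rightarrow> 'a \<Rightarrow> complex" and \<omega> :: 'a
  assumes L: "1 \<le> L" "L \<le> N" and i: "fst i \<in> {1..L}" "fst i' \<in> {1..L}"
  defines "V \<equiv> lag_mat y N (\<lambda>_. True) \<omega>" and "V' \<equiv> lag_mat y N (\<lambda>t. 1 \<le> t \<and> t \<le> int N) \<omega>"
  shows "gram {0..int N - 1} V i i' - gram {1 - int L..int N - 1} V' i i'
       = gram {int N - int L + 1..int N - 1} V i i' - gram {int N - int L + 1..int N - 1} V' i i'
         - gram {1 - int L..-1} V' i i'"
proof -
  define C where "C = {0..int N - int L}"
  define E where "E = {int N - int L + 1..int N - 1}"
  define E' where "E' = {1 - int L..-1::int}"
  have split: "{0..int N - 1} = C \<union> E" "{1 - int L..int N - 1} = E' \<union> (C \<union> E)"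
    and disjoint: "C \<inter> E = {}" "E' \<inter> (C \<union> E) = {}"
    unfolding C_def E_def E'_def using L by auto
  have "gram C V i i' = gram C V' i i'"
    unfolding gram_def V_def V'_def lag_mat_def C_def using i by (intro sum.cong refl) auto
  then show ?thesis
    unfolding split E_def[symmetric] E'_def[symmetric] gram_def
    using disjoint by (simp add: sum.union_disjoint C_def E_def E'_def)
qed

lemma L2_set_apply_diff_le:
  "L2_set (\<lambda>i. cmod (\<Sum>j\<in>J. (A i j - B i j) * x j)) I
     \<le> L2_set (\<lambda>i. cmod (\<Sum>j\<in>J. A i j * x j)) I + L2_set (\<lambda>i. cmod (\<Sum>j\<in>J. B i j * x j)) I"
proof -
  have "cmod (\<Sum>j\<in>J. (A i j - B i j) * x j) \<le> cmod (\<Sum>j\<in>J. A i j * x j) + cmod (\<Sum>j\<in>J. B i j * x j)" for i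
    by (simp add: left_diff_distrib sum_subtractf norm_triangle_ineq4)
  then show ?thesis
    by (rule order.trans[OF L2_set_mono L2_set_triangle_ineq]) simp
qed

text \<open>The sample windows \<open>{p..q}\<close>, with their masks, that contain every entry of the three
  edge Gram blocks of \<open>gram_lag_mat_diff_eq_edges\<close>.\<close>

definition edge_windows :: "nat \<Rightarrow> nat \<Rightarrow> (int \<times> int \<times> (int \<Rightarrow> bool)) set" where
  "edge_windows N L =
     {(int N - int L + 2, int N + int L - 1, \<lambda>_. True),
      (int N - int L + 2, int N + int L - 1, \<lambda>t. 1 \<le> t \<and> t \<le> int N),
      (2 - int L, int L - 1, \<lambda>t. 1 \<le> t \<and> t \<le> int N)}"

lemma finite_edge_windows[simp]: "finite (edge_windows N L)"
  by (simp add: edge_windows_def)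

lemma card_edge_windows_le: "card (edge_windows N L) \<le> 3"
  unfolding edge_windows_def by (simp add: card_insert_if)

lemma card_edge_window_le:
  assumes "(p, q, ch) \<in> edge_windows N L"
  shows "card {p..q} \<le> 2 * L"
  using assms unfolding edge_windows_def by auto

lemma opnorm_gram_diff_le:
  fixes y :: "nat \<Rightarrow> int \<Rightarrow> 'a \<Rightarrow> complex"
  assumes L: "1 \<le> L" "L \<le> N" and \<alpha>: "0 \<le> \<alpha>"
    and energy: "\<And>p q ch k. (p, q, ch) \<in> edge_windows N L \<Longrightarrow> k < 3 * L \<Longrightarrow>
                   window_energy y M (3 * L) p q ch k \<omega> \<le> real N * (\<alpha> / 3)"
  shows "opnorm ({1..L}\<times>{1..M}) ({1..L}\<times>{1..M})
           (\<lambda>i i'. gram {1..N} (W_mat y N \<omega>) i i' - gram {1..N + L - 1} (Wt_mat y N L \<omega>) i i') \<le> \<alpha>"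
proof (rule opnorm_le[OF \<alpha>])
  fix x :: "nat \<times> nat \<Rightarrow> complex"
  define I where "I = {1..L}\<times>{1..M}"
  define V where "V = lag_mat y N (\<lambda>_. True) \<omega>"
  define V' where "V' = lag_mat y N (\<lambda>t. 1 \<le> t \<and> t \<le> int N) \<omega>"
  define E where "E = {int N - int L + 1..int N - 1}"
  define E' where "E' = {1 - int L..-1::int}"
  let ?L2 = "\<lambda>A. L2_set (\<lambda>i. cmod (\<Sum>j\<in>I. A i j * x j)) I"
  have "0 < N" using L by simp
  note window_gram = window_gram_L2_le[OF this L(1), of "\<alpha> / 3", where M=M and x=x]
  have "?L2 (gram E V) \<le> \<alpha> / 3 * L2_set (\<lambda>i. cmod (x i)) I"
    unfolding I_def V_def E_def using \<alpha>
    by (intro window_gram[where p="int N - int L + 2" and q="int N + int L - 1"] energy)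
       (auto simp: edge_windows_def)
  moreover have "?L2 (gram E V') \<le> \<alpha> / 3 * L2_set (\<lambda>i. cmod (x i)) I"
    unfolding I_def V'_def E_def using \<alpha>
    by (intro window_gram[where p="int N - int L + 2" and q="int N + int L - 1"] energy)
       (auto simp: edge_windows_def)
  moreover have "?L2 (gram E' V') \<le> \<alpha> / 3 * L2_set (\<lambda>i. cmod (x i)) I"
    unfolding I_def V'_def E'_def using \<alpha>
    by (intro window_gram[where p="2 - int L" and q="int L - 1"] energy)
       (auto simp: edge_windows_def)
  moreover have "?L2 (\<lambda>i i'. gram {1..N} (W_mat y N \<omega>) i i' - gram {1..N + L - 1} (Wt_mat y N L \<omega>) i i')
      = ?L2 (\<lambda>i i'. gram E V i i' - gram E V' i i' - gram E' V' i i')"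
    unfolding gram_W_mat_eq_lag_mat gram_Wt_mat_eq_lag_mat[OF L(1)] V_def V'_def E_def E'_def
    by (intro L2_set_cong refl arg_cong[where f=cmod] sum.cong arg_cong2[where f="(*)"]
          gram_lag_mat_diff_eq_edges[OF L]) (auto simp: I_def)
  moreover have "?L2 (\<lambda>i i'. gram E V i i' - gram E V' i i' - gram E' V' i i')
      \<le> ?L2 (gram E V) + ?L2 (gram E V') + ?L2 (gram E' V')"
    using L2_set_apply_diff_le[where A="\<lambda>i i'. gram E V i i' - gram E V' i i'" and B="gram E' V'" and J=I and I=I and x=x]
      L2_set_apply_diff_le[where A="gram E V" and B="gram E V'" and J=I and I=I and x=x] by linarith
  ultimately show "?L2 (\<lambda>i i'. gram {1..N} (W_mat y N \<omega>) i i' - gram {1..N + L - 1} (Wt_mat y N L \<omega>) i i')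
      \<le> \<alpha> * L2_set (\<lambda>j. cmod (x j)) ({1..L}\<times>{1..M})"
    unfolding I_def by linarith
qed

section \<open>Tail bound\<close>

lemma measure_opnorm_gram_diff_gt_le:
  fixes P :: "'a measure" and y :: "nat \<Rightarrow> int \<Rightarrow> 'a \<Rightarrow> complex" and r :: "nat \<Rightarrow> int \<Rightarrow> complex"
  assumes P: "prob_space P"
    and x: "\<And>m. m \<ge> 1 \<Longrightarrow> zm_ccs_gaussian_series P (y m)"
    and ac: "\<And>m n k. m \<ge> 1 \<Longrightarrow> integral\<^sup>L P (\<lambda>\<omega>. y m (n + k) \<omega> * cnj (y m n \<omega>)) = r m k"
    and indep: "prob_space.indep_vars P (\<lambda>_. Pi\<^sub>M (UNIV :: int set) (\<lambda>_. borel))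
                  (\<lambda>m \<omega>. \<lambda>n. y m n \<omega>) {1..}"
    and R: "\<And>m F. m \<ge> 1 \<Longrightarrow> finite F \<Longrightarrow> (\<Sum>d\<in>F. cmod (r m d)) \<le> R" "0 < R"
    and L: "1 \<le> L" "L \<le> N" and \<alpha>: "0 \<le> \<alpha>"
  shows "measure P {\<omega> \<in> space P.
             opnorm ({1..L} \<times> {1..M}) ({1..L} \<times> {1..M})
               (\<lambda>i i'. gram {1..N} (W_mat y N \<omega>) i i'
                       - gram {1..N + L - 1} (Wt_mat y N L \<omega>) i i') > \<alpha>}
         \<le> 9 * real L * (exp (- (real N * \<alpha>) / (48 * real L * R)) * sqrt 2 ^ M)"
proof -
  interpret prob_space P by fact
  define B where "B = edge_windows N L \<times> {..<3 * L}"
  define bound where "bound = exp (- (real N * \<alpha>) / (48 * real L * R)) * sqrt 2 ^ M"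
  define event where "event b = {\<omega> \<in> space P. real N * (\<alpha> / 3) < window_energy y M (3 * L) (fst (fst b))
      (fst (snd (fst b))) (snd (snd (fst b))) (snd b) \<omega>}" for b
  have [measurable]: "y m t \<in> borel_measurable P" if "m \<in> {1..M}" for m t
    using x that by auto
  have event_sets: "event b \<in> sets P" for b
    unfolding event_def window_energy_def by measurable
  have "finite B" unfolding B_def by simp
  have event_le: "measure P (event b) \<le> bound" if "b \<in> B" for b
  proof -
    obtain p q ch k where b: "b = ((p, q, ch), k)" by (metis prod.collapse)
    have "real (card {p..q}) * R \<le> 2 * real L * R"
      using card_edge_window_le[of p q ch N L] that R(2) unfolding b B_def by simp
    then have "measure P (event b) \<le> exp (- (real N * (\<alpha> / 3)) / (8 * (2 * real L * R))) * sqrt 2 ^ M"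
      unfolding event_def window_energy_def b using L R(2)
      by (intro chernoff_sum_cmod_square[OF P x ac indep _ _ R(1)]) auto
    also have "\<dots> = bound" unfolding bound_def by (simp add: field_simps)
    finally show ?thesis .
  qed
  have "{\<omega> \<in> space P. opnorm ({1..L} \<times> {1..M}) ({1..L} \<times> {1..M})
               (\<lambda>i i'. gram {1..N} (W_mat y N \<omega>) i i' - gram {1..N + L - 1} (Wt_mat y N L \<omega>) i i') > \<alpha>}
      \<subseteq> (\<Union>b\<in>B. event b)"
    using opnorm_gram_diff_le[OF L \<alpha>, where M=M and y=y] unfolding B_def event_def
    by (fastforce simp: not_less)
  then have "measure P {\<omega> \<in> space P. opnorm ({1..L} \<times> {1..M}) ({1..L} \<times> {1..M})
               (\<lambda>i i'. gram {1..N} (W_mat y N \<omega>) i i' - gram {1..N + L - 1} (Wt_mat y N L \<omega>) i i') > \<alpha>}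
      \<le> (\<Sum>b\<in>B. measure P (event b))"
    using \<open>finite B\<close> event_sets
    by (intro order.trans[OF finite_measure_mono finite_measure_subadditive_finite]) auto
  also have "\<dots> \<le> real (card B) * bound"
    using sum_bounded_above[of B "\<lambda>b. measure P (event b)" bound] event_le by simp
  also have "\<dots> \<le> 9 * real L * bound"
  proof (rule mult_right_mono)
    have "real (card (edge_windows N L)) \<le> 3" using card_edge_windows_le[of N L] by simp
    from mult_right_mono[OF this, of "3 * real L"]
    show "real (card B) \<le> 9 * real L" unfolding B_def card_cartesian_product by simp
  qed (simp add: bound_def)
  finally show ?thesis unfolding bound_def .
qed

lemma uniform_sum_norm_bound:
  fixes r :: "nat \<Rightarrow> int \<Rightarrow> complex"
  assumes "\<exists>\<gamma>>0. \<exists>C. \<forall>m\<ge>1.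
      (\<lambda>n. (1 + \<bar>real_of_int n\<bar>) powr \<gamma> * cmod (r m n)) summable_on (UNIV :: int set) \<and>
      (\<Sum>\<^sub>\<infinity>n\<in>(UNIV :: int set). (1 + \<bar>real_of_int n\<bar>) powr \<gamma> * cmod (r m n)) \<le> C"
  obtains R where "0 < R" "\<And>m F. 1 \<le> m \<Longrightarrow> finite F \<Longrightarrow> (\<Sum>d\<in>F. cmod (r m d)) \<le> R"
proof -
  obtain \<gamma> C where \<gamma>: "\<gamma> > 0" and C: "\<And>m. m \<ge> 1 \<Longrightarrow>
      (\<lambda>n. (1 + \<bar>real_of_int n\<bar>) powr \<gamma> * cmod (r m n)) summable_on UNIV \<and>
      (\<Sum>\<^sub>\<infinity>n\<in>UNIV. (1 + \<bar>real_of_int n\<bar>) powr \<gamma> * cmod (r m n)) \<le> C"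
    using assms by blast
  have "(\<Sum>d\<in>F. cmod (r m d)) \<le> max C 1" if m: "1 \<le> m" and F: "finite F" for m F
  proof -
    have weight: "1 \<le> (1 + \<bar>real_of_int d\<bar>) powr \<gamma>" for d
      using \<gamma> by (intro ge_one_powr_ge_zero) auto
    have "(\<Sum>d\<in>F. cmod (r m d)) \<le> (\<Sum>d\<in>F. (1 + \<bar>real_of_int d\<bar>) powr \<gamma> * cmod (r m d))"
      using mult_right_mono[OF weight norm_ge_zero] by (intro sum_mono) simp
    also have "\<dots> \<le> (\<Sum>\<^sub>\<infinity>n\<in>UNIV. (1 + \<bar>real_of_int n\<bar>) powr \<gamma> * cmod (r m n))"
      using C[OF m] F by (intro finite_sum_le_infsum) auto
    also have "\<dots> \<le> max C 1" using C[OF m] by linarith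
    finally show ?thesis .
  qed
  then show ?thesis by (intro that[of "max C 1"]) auto
qed

lemma eventually_dimensions_bounded:
  fixes M L :: "nat \<Rightarrow> nat"
  assumes M: "filterlim M at_top sequentially" and c: "0 < c"
    and ratio: "(\<lambda>N. real (M N) * real (L N) / real N) \<longlonglongrightarrow> c"
  shows "eventually (\<lambda>N. 1 \<le> L N \<and> L N \<le> N \<and> real (M N) * real (L N) \<le> 2 * c * real N) sequentially"
proof -
  have "eventually (\<lambda>N. c / 2 < real (M N) * real (L N) / real N) sequentially"
    "eventually (\<lambda>N. real (M N) * real (L N) / real N < 2 * c) sequentially"
    "eventually (\<lambda>N. 2 * c < real (M N)) sequentially"
    using c order_tendstoD[OF ratio, of "c / 2"] order_tendstoD[OF ratio, of "2 * c"]
      filterlim_at_top_dense[THEN iffD1, OF filterlim_real_sequentially[THEN filterlim_compose, OF M]]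
    by (auto simp: comp_def)
  then show ?thesis
  proof eventually_elim
    case (elim N)
    have N: "0 < N" and L: "1 \<le> L N"
      using elim(1) c by (cases "N = 0"; cases "L N = 0"; simp)+
    have bound: "real (M N) * real (L N) \<le> 2 * c * real N"
      using elim(2) N by (simp add: divide_less_eq)
    also have "\<dots> \<le> real (M N) * real N"
      using elim(3) by (intro mult_right_mono) auto
    finally have "L N \<le> N"
      using elim(3) c by (simp add: mult_le_cancel_left_pos)
    with L bound show ?case by blast
  qed
qed

lemma sqrt_2_power_le_exp: "sqrt 2 ^ M \<le> exp (real M / 2)"
proof -
  have "(sqrt 2)\<^sup>2 \<le> (exp (1 / 2 :: real))\<^sup>2"
    using exp_ge_add_one_self[of 1] by (simp add: power2_eq_square exp_add[symmetric])
  then have "sqrt 2 \<le> exp (1 / 2 :: real)" by (rule power2_le_imp_le) simp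
  then have "sqrt 2 ^ M \<le> exp (1 / 2) ^ M" by (rule power_mono) simp
  then show ?thesis by (simp add: exp_of_nat_mult[symmetric])
qed

lemma exp_tail_le:
  fixes c R \<alpha> :: real
  assumes c: "0 < c" and R: "0 < R" and L: "1 \<le> L" and ratio: "real M * real L \<le> 2 * c * real N"
    and \<alpha>: "96 * c * R \<le> \<alpha>"
  shows "exp (- (real N * \<alpha>) / (48 * real L * R)) * sqrt 2 ^ M \<le> exp (- (1 / (192 * c * R)) * real M * \<alpha>)"
proof -
  have \<alpha>0: "0 \<le> \<alpha>" using \<alpha> c R by (smt (verit) mult_pos_pos)
  have "real M * \<alpha> / (96 * c * R) = (real M * real L) * \<alpha> / (96 * c * R * real L)"
    using L by simp
  also have "\<dots> \<le> (2 * c * real N) * \<alpha> / (96 * c * R * real L)"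
    using ratio \<alpha>0 c R L by (intro divide_right_mono mult_right_mono) auto
  also have "\<dots> = real N * \<alpha> / (48 * real L * R)"
    using c by (simp add: mult_ac)
  finally have decay: "real M * \<alpha> / (96 * c * R) \<le> real N * \<alpha> / (48 * real L * R)" .
  have "real M / 2 = real M * (96 * c * R) / (192 * c * R)"
    using c R by simp
  also have "\<dots> \<le> real M * \<alpha> / (192 * c * R)"
    using \<alpha> c R by (intro divide_right_mono mult_left_mono) auto
  finally have "real M / 2 \<le> real M * \<alpha> / (192 * c * R)" .
  moreover have "real M * \<alpha> / (96 * c * R) = 2 * (real M * \<alpha> / (192 * c * R))"
    by (simp add: mult_ac)
  ultimately have "- (real N * \<alpha> / (48 * real L * R)) + real M / 2 \<le> - (real M * \<alpha> / (192 * c * R))"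
    using decay by linarith
  then have "exp (- (real N * \<alpha>) / (48 * real L * R) + real M / 2) \<le> exp (- (1 / (192 * c * R)) * real M * \<alpha>)"
    by simp
  then have "exp (- (real N * \<alpha>) / (48 * real L * R)) * exp (real M / 2) \<le> exp (- (1 / (192 * c * R)) * real M * \<alpha>)"
    by (simp only: exp_add)
  then show ?thesis
    using sqrt_2_power_le_exp[of M] by (meson exp_ge_zero mult_left_mono order_trans)
qed

theorem proposition2p2:
  fixes P :: "'a measure"
    and y :: "nat \<Rightarrow> int \<Rightarrow> 'a \<Rightarrow> complex"
    and r :: "nat \<Rightarrow> int \<Rightarrow> complex"
    and M L :: "nat \<Rightarrow> nat"
    and c_star \<beta> :: real
  assumes prob: "prob_space P"
    \<comment> \<open>(A1)\<close>
    and gauss: "\<And>m. m \<ge> 1 \<Longrightarrow> zm_ccs_gaussian_series P (y m)"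
    and autocov: "\<And>m n k. m \<ge> 1 \<Longrightarrow>
                    integral\<^sup>L P (\<lambda>\<omega>. y m (n + k) \<omega> * cnj (y m n \<omega>)) = r m k"
    and indep: "prob_space.indep_vars P (\<lambda>_. Pi\<^sub>M (UNIV :: int set) (\<lambda>_. borel))
                  (\<lambda>m \<omega>. \<lambda>n. y m n \<omega>) {1..}"
    \<comment> \<open>(A2)\<close>
    and M_lim: "filterlim M at_top sequentially"
    and c_pos: "c_star > 0"
    and prod_lim: "(\<lambda>N. real (M N) * real (L N) / real N) \<longlonglongrightarrow> c_star"
    and \<beta>: "0 < \<beta>" "\<beta> < 1"
    and L_growth: "(\<lambda>N. real (L N)) \<in> O(\<lambda>N. real N powr \<beta>)"
    \<comment> \<open>(A3)\<close>
    and S_sup: "\<exists>B. \<forall>m\<ge>1. \<forall>\<nu>. Re (spectral_density (r m) \<nu>) \<le> B"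
    and S_inf: "\<exists>b>0. \<forall>m\<ge>1. \<forall>\<nu>. Re (spectral_density (r m) \<nu>) \<ge> b"
    \<comment> \<open>(A5)\<close>
    and A5: "\<exists>\<gamma>\<^sub>0>0. \<exists>C. \<forall>m\<ge>1.
               (\<lambda>n. (1 + \<bar>real_of_int n\<bar>) powr \<gamma>\<^sub>0 * cmod (r m n)) summable_on (UNIV :: int set) \<and>
               (\<Sum>\<^sub>\<infinity>n\<in>(UNIV :: int set). (1 + \<bar>real_of_int n\<bar>) powr \<gamma>\<^sub>0 * cmod (r m n)) \<le> C"
  shows "\<exists>\<kappa>\<^sub>1>0. \<exists>\<kappa>\<^sub>2>0. \<exists>\<alpha>\<^sub>0. \<exists>N\<^sub>0. \<forall>\<alpha>\<ge>\<alpha>\<^sub>0. \<forall>N\<ge>N\<^sub>0.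
           measure P {\<omega> \<in> space P.
             opnorm ({1..L N} \<times> {1..M N}) ({1..L N} \<times> {1..M N})
               (\<lambda>i i'. gram {1..N} (W_mat y N \<omega>) i i'
                       - gram {1..N + L N - 1} (Wt_mat y N (L N) \<omega>) i i') > \<alpha>}
           \<le> \<kappa>\<^sub>1 * real (L N) * exp (- \<kappa>\<^sub>2 * real (M N) * \<alpha>)"
proof -
  obtain R where R: "0 < R" "\<And>m F. 1 \<le> m \<Longrightarrow> finite F \<Longrightarrow> (\<Sum>d\<in>F. cmod (r m d)) \<le> R"
    using uniform_sum_norm_bound[OF A5] by blast
  obtain N\<^sub>0 where dims: "\<And>N. N \<ge> N\<^sub>0 \<Longrightarrow>
      1 \<le> L N \<and> L N \<le> N \<and> real (M N) * real (L N) \<le> 2 * c_star * real N"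
    using eventually_dimensions_bounded[OF M_lim c_pos prod_lim] unfolding eventually_sequentially by blast
  define \<kappa> where "\<kappa> = 1 / (192 * c_star * R)"
  have "measure P {\<omega> \<in> space P.
             opnorm ({1..L N} \<times> {1..M N}) ({1..L N} \<times> {1..M N})
               (\<lambda>i i'. gram {1..N} (W_mat y N \<omega>) i i'
                       - gram {1..N + L N - 1} (Wt_mat y N (L N) \<omega>) i i') > \<alpha>}
          \<le> 9 * real (L N) * exp (- \<kappa> * real (M N) * \<alpha>)"
    if \<alpha>: "96 * c_star * R \<le> \<alpha>" and N: "N\<^sub>0 \<le> N" for \<alpha> N
  proof -
    have L: "1 \<le> L N" "L N \<le> N" and ratio: "real (M N) * real (L N) \<le> 2 * c_star * real N"
      using dims[OF N] by auto
    have "0 \<le> \<alpha>" using \<alpha> c_pos R(1) by (smt (verit) mult_pos_pos)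
    have "exp (- (real N * \<alpha>) / (48 * real (L N) * R)) * sqrt 2 ^ M N \<le> exp (- \<kappa> * real (M N) * \<alpha>)"
      unfolding \<kappa>_def by (rule exp_tail_le[OF c_pos R(1) L(1) ratio \<alpha>])
    then show ?thesis
      by (intro order.trans[OF measure_opnorm_gram_diff_gt_le[OF prob gauss autocov indep R(2,1) L \<open>0 \<le> \<alpha>\<close>]]
          mult_left_mono) auto
  qed
  moreover have "0 < \<kappa>" using c_pos R(1) by (simp add: \<kappa>_def)
  ultimately show ?thesis
    by (intro exI[of _ 9] exI[of _ \<kappa>] exI[of _ "96 * c_star * R"] exI[of _ N\<^sub>0] conjI allI impI) auto
qed

end
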